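(* Let $0<q<1$ and let $T$ be an optimal tree for $\mathrm{TDGD}(q)$. For each signature $s$, let $L(s)$ be the depth of a level of $T$ containing at least half of the $s+1$ leaves of signature $s$ (such a level exists since these leaves lie in at most two consecutive levels; ties broken by any fixed rule). Let $s\ge 0$ and let $\ell\ge 2$ be an integer with $s\ge 2^{\ell+2}-1$, and suppose $s'>s$ is a signature with $L(s')=L(s)+\ell$. Then $$\frac{\ell-2}{\log_2 q^{-1}}\le s'-s\le \frac{\ell+1}{\log_2 q^{-1}}.$$
   Context: $\mathcal{A}=\{(i,j): i,j\in\mathbb{Z}_{\ge 0}\}$; $\mathrm{TDGD}(q)$ is the distribution $P(i,j)=(1-q)^2q^{i+j}$ on $\mathcal{A}$. A prefix code for $\mathcal{A}$ is a full binary tree whose leaves are in bijection with $\mathcal{A}$; codeword length = depth of leaf; a tree is optimal for $\mathrm{TDGD}(q)$ if it minimizes expected codeword length. The signature of $(i,j)$ is $i+j$; there are exactly $s+1$ symbols of signature $s$. *)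

theory Defs
  imports "HOL-Analysis.Analysis" "HOL-Library.Sublist"
begin

definition TDGD :: "real \<Rightarrow> nat \<times> nat \<Rightarrow> real" where
  "TDGD q = (\<lambda>(i, j). (1 - q)^2 * q^(i + j))"

text \<open>A prefix code for the alphabet of pairs, given as a full binary tree whose
  leaves are in bijection with the alphabet: the codeword of a symbol is the path
  (list of bits) from the root to its leaf.  The nodes of the tree are the prefixes
  of codewords; leaves are exactly the codewords (injective and prefix-free);
  fullness: every internal node (strict prefix of a codeword) has both children.\<close>
definition is_prefix_code_tree :: "(nat \<times> nat \<Rightarrow> bool list) \<Rightarrow> bool" where
  "is_prefix_code_tree c \<longleftrightarrow>
     inj c \<and>
     (\<forall>x y. x \<noteq> y \<longrightarrow> \<not> prefix (c x) (c y)) \<and>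
     (\<forall>w b. (\<exists>x. strict_prefix w (c x)) \<longrightarrow> (\<exists>x. prefix (w @ [b]) (c x)))"

definition expected_length :: "real \<Rightarrow> (nat \<times> nat \<Rightarrow> bool list) \<Rightarrow> ennreal" where
  "expected_length q c = (\<Sum>\<^sub>\<infinity> a\<in>UNIV. ennreal (TDGD q a * real (length (c a))))"

definition optimal_tree :: "real \<Rightarrow> (nat \<times> nat \<Rightarrow> bool list) \<Rightarrow> bool" where
  "optimal_tree q c \<longleftrightarrow> is_prefix_code_tree c \<and>
     (\<forall>c'. is_prefix_code_tree c' \<longrightarrow> expected_length q c \<le> expected_length q c')"

definition majority_level :: "(nat \<times> nat \<Rightarrow> bool list) \<Rightarrow> (nat \<Rightarrow> nat) \<Rightarrow> bool" where
  "majority_level c L \<longleftrightarrow>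
     (\<forall>s. 2 * card {(i, j). i + j = s \<and> length (c (i, j)) = L s} \<ge> s + 1)"

end

theory Submission
  imports Defs
begin

text \<open>
  Let \<open>D = L s\<close> and \<open>T = L s' = D + l\<close>.  Some leaf \<open>a\<close> of signature \<open>s\<close> lies at
  depth \<open>D\<close>, and at least \<open>(s' + 1)/2 \<ge> 2^(l+1)\<close> leaves of signature \<open>s'\<close> lie at depth \<open>T\<close>;
  these have probabilities \<open>p = (1-q)\<^sup>2 q^s\<close> and \<open>p' = (1-q)\<^sup>2 q^s'\<close>.  We show
  \<open>2^(l-1) p' \<le> p \<le> 2^(l+1) p'\<close>, from which the claim follows by taking logarithms.

  The proof rests on two kinds of subtree exchanges in a prefix code tree:
  \<^item> exchanging two incomparable subtrees of different depth changes the expected length by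
    the depth difference times the difference of their weights, so in an optimal tree a
    deeper subtree never weighs more than a shallower one (\<open>exchange_inequality\<close>);
  \<^item> exchanging two subtrees at the same depth preserves all codeword lengths, hence
    optimality.  Using such exchanges, any \<open>2^h\<close> distinct subtrees at depth \<open>T\<close> can be
    gathered, level by level, below a single node at depth \<open>T - h\<close> (\<open>grouping\<close>).
  Gathering \<open>2^(l-1)\<close> (resp. \<open>2^(l+1)\<close>) of the deep leaves below a node at depth \<open>D + 1\<close>
  (resp. \<open>D - 1\<close>) and comparing that node with the leaf \<open>a\<close> gives the two inequalities.
  Optimality is only usable when the expected length is finite; this is guaranteed by an
  explicit code of finite expected length (\<open>unary_code\<close>).
\<close>


section \<open>Optimal codes have finite expected length\<close>

lemma infsum_ennreal_of_real:
  fixes f :: "'a \<Rightarrow> real"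
  assumes "f summable_on A" and "\<And>x. x \<in> A \<Longrightarrow> 0 \<le> f x"
  shows "(\<Sum>\<^sub>\<infinity>x\<in>A. ennreal (f x)) = ennreal (\<Sum>\<^sub>\<infinity>x\<in>A. f x)"
proof -
  have "\<And>F. \<lbrakk>finite F; F \<subseteq> A\<rbrakk> \<Longrightarrow> sum (ennreal \<circ> f) F = ennreal (sum f F)"
    by (metis (mono_tags, lifting) comp_def assms(2) subsetD sum.cong sum_ennreal)
  then have "infsum (ennreal \<circ> f) A = ennreal (infsum f A)"
    by (simp add: infsum_comm_additive_general assms(1))
  then show ?thesis by (simp add: comp_def)
qed

lemma summable_on_product_nonneg:
  fixes f g :: "nat \<Rightarrow> real"
  assumes "f summable_on UNIV" "g summable_on UNIV" "\<And>n. 0 \<le> f n" "\<And>n. 0 \<le> g n"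
  shows "(\<lambda>(i, j). f i * g j) summable_on UNIV"
proof -
  have "(\<lambda>(i, j). f i * g j) summable_on Sigma UNIV (\<lambda>_. UNIV)"
  proof (rule summable_on_SigmaI[where g = "\<lambda>i. f i * infsum g UNIV"])
    fix i :: nat
    show "((\<lambda>j. case (i, j) of (i, j) \<Rightarrow> f i * g j) has_sum f i * infsum g UNIV) UNIV"
      using has_sum_cmult_right[OF has_sum_infsum[OF assms(2)], of "f i"] by simp
  next
    show "(\<lambda>i. f i * infsum g UNIV) summable_on UNIV"
      using summable_on_cmult_left[OF assms(1)] by simp
  qed (use assms in auto)
  then show ?thesis by simp
qed

text \<open>The code \<open>(i, j) \<mapsto> 1^i 0 1^j 0\<close>: its codeword lengths \<open>i + j + 2\<close> have finite mean.\<close>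
definition unary_code :: "nat \<times> nat \<Rightarrow> bool list" where
  "unary_code = (\<lambda>(i, j). replicate i True @ False # replicate j True @ [False])"

lemma unary_prefix_cancel:
  "prefix (replicate i True @ False # r) (replicate i' True @ False # r') \<Longrightarrow> i = i' \<and> prefix r r'"
proof (induction i arbitrary: i')
  case 0 then show ?case by (cases i') auto
next
  case (Suc i) then show ?case by (cases i') auto
qed

lemma prefix_replicate: "prefix w (replicate n x) \<Longrightarrow> \<exists>k\<le>n. w = replicate k x"
proof (induction n arbitrary: w)
  case 0 then show ?case by simp
next
  case (Suc n)
  show ?case
  proof (cases w)
    case Nil then show ?thesis by (intro exI[of _ 0]) auto
  next
    case (Cons y w1)
    then have "y = x" "prefix w1 (replicate n x)" using Suc.prems by auto
    with Suc.IH obtain k where "k \<le> n" "w1 = replicate k x" by blast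
    then show ?thesis using Cons \<open>y = x\<close> by (intro exI[of _ "Suc k"]) auto
  qed
qed

lemma prefix_unary_cases:
  "prefix w (replicate i True @ False # r) \<Longrightarrow>
   (\<exists>k\<le>i. w = replicate k True) \<or> (\<exists>w'. w = replicate i True @ False # w' \<and> prefix w' r)"
proof (induction i arbitrary: w)
  case 0 then show ?case by (cases w) auto
next
  case (Suc i)
  show ?case
  proof (cases w)
    case Nil then show ?thesis by (intro disjI1 exI[of _ 0]) auto
  next
    case (Cons x w1)
    then have x: "x = True" and p: "prefix w1 (replicate i True @ False # r)"
      using Suc.prems by auto
    from Suc.IH[OF p] show ?thesis
    proof
      assume "\<exists>k\<le>i. w1 = replicate k True"
      then obtain k where "k \<le> i" "w1 = replicate k True" by blast
      then show ?thesis using Cons x by (intro disjI1 exI[of _ "Suc k"]) auto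
    next
      assume "\<exists>w'. w1 = replicate i True @ False # w' \<and> prefix w' r"
      then show ?thesis using Cons x by auto
    qed
  qed
qed

lemma unary_code_prefix_free: "prefix (unary_code x) (unary_code y) \<Longrightarrow> x = y"
proof -
  assume p: "prefix (unary_code x) (unary_code y)"
  obtain i j i' j' where xy: "x = (i, j)" "y = (i', j')" by (cases x, cases y)
  from p have "i = i'" and "prefix (replicate j True @ False # []) (replicate j' True @ False # [])"
    unfolding xy unary_code_def by (auto dest!: unary_prefix_cancel)
  then show "x = y" using xy unary_prefix_cancel[of j "[]" j' "[]"] by simp
qed

lemma unary_code_full:
  assumes sp: "strict_prefix w (unary_code x)"
  shows "\<exists>y. prefix (w @ [b]) (unary_code y)"
proof -
  obtain i j where x: "x = (i, j)" by (cases x)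
  from sp have "prefix w (replicate i True @ False # (replicate j True @ [False]))"
    unfolding x unary_code_def by (auto simp: strict_prefix_def)
  from prefix_unary_cases[OF this] show ?thesis
  proof
    assume "\<exists>k\<le>i. w = replicate k True"
    then obtain k where w: "w = replicate k True" by blast
    show ?thesis
    proof (cases b)
      case True then show ?thesis unfolding w unary_code_def
        by (intro exI[of _ "(Suc k, 0)"]) (simp add: replicate_append_same[symmetric])
    next
      case False then show ?thesis unfolding w unary_code_def
        by (intro exI[of _ "(k, 0)"]) simp
    qed
  next
    assume "\<exists>w'. w = replicate i True @ False # w' \<and> prefix w' (replicate j True @ [False])"
    then obtain w' where w: "w = replicate i True @ False # w'"
      and p: "prefix w' (replicate j True @ [False])" by blast
    have "w' \<noteq> replicate j True @ [False]" using sp w unfolding x unary_code_def by auto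
    then have "prefix w' (replicate j True)" using p by auto
    from prefix_replicate[OF this] obtain k where w': "w' = replicate k True" by blast
    show ?thesis
    proof (cases b)
      case True then show ?thesis unfolding w w' unary_code_def
        by (intro exI[of _ "(i, Suc k)"]) (simp add: replicate_append_same[symmetric])
    next
      case False then show ?thesis unfolding w w' unary_code_def
        by (intro exI[of _ "(i, k)"]) simp
    qed
  qed
qed

lemma unary_code_tree: "is_prefix_code_tree unary_code"
  unfolding is_prefix_code_tree_def
  using unary_code_prefix_free unary_code_full by (metis injI prefix_order.refl)

text \<open>The expected length splits as \<open>(1-q)\<^sup>2 \<Sum>(i+1) q^i q^j + (1-q)\<^sup>2 \<Sum>q^i (j+1) q^j\<close>,
  a sum of two products of convergent series.\<close>
lemma unary_code_cost_finite:
  assumes "0 < q" "q < 1"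
  shows "expected_length q unary_code < \<infinity>"
proof -
  define f where "f = (\<lambda>n::nat. real (Suc n) * q ^ n)"
  define g where "g = (\<lambda>n::nat. q ^ n)"
  have "summable f"
    using geometric_deriv_sums[of q] assms unfolding f_def by (auto simp: sums_iff)
  then have f: "f summable_on UNIV"
    using assms by (subst summable_on_UNIV_nonneg_real_iff) (auto simp: f_def)
  have g: "g summable_on UNIV"
    using assms by (subst summable_on_UNIV_nonneg_real_iff) (auto simp: g_def)
  have nonneg: "\<And>n. 0 \<le> f n" "\<And>n. 0 \<le> g n" using assms by (auto simp: f_def g_def)
  have "(\<lambda>a. (1 - q)^2 * ((\<lambda>(i, j). f i * g j) a + (\<lambda>(i, j). g i * f j) a)) summable_on UNIV"
    using summable_on_product_nonneg[OF f g] summable_on_product_nonneg[OF g f] nonneg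
    by (intro summable_on_cmult_right summable_on_add) auto
  moreover have "(\<lambda>a. TDGD q a * real (length (unary_code a)))
      = (\<lambda>a. (1 - q)^2 * ((\<lambda>(i, j). f i * g j) a + (\<lambda>(i, j). g i * f j) a))"
    by (auto simp: TDGD_def unary_code_def f_def g_def algebra_simps power_add)
  ultimately have "(\<lambda>a. TDGD q a * real (length (unary_code a))) summable_on UNIV"
    by simp
  moreover have "\<And>a. 0 \<le> TDGD q a * real (length (unary_code a))"
    using assms by (auto simp: TDGD_def)
  ultimately show ?thesis
    unfolding expected_length_def by (simp add: infsum_ennreal_of_real)
qed

lemma optimal_cost_finite:
  assumes "0 < q" "q < 1" "optimal_tree q c"
  shows "expected_length q c < \<infinity>"
  using assms unary_code_tree unary_code_cost_finite
  unfolding optimal_tree_def by (meson le_less_trans)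

lemma optimal_tree_same_lengths:
  assumes "optimal_tree q c" "is_prefix_code_tree c'" "\<And>x. length (c' x) = length (c x)"
  shows "optimal_tree q c'"
  using assms unfolding optimal_tree_def expected_length_def by simp


section \<open>Exchanging two subtrees\<close>

lemma tree_prefix_free: "is_prefix_code_tree c \<Longrightarrow> prefix (c x) (c y) \<Longrightarrow> x = y"
  unfolding is_prefix_code_tree_def by blast

lemma tree_full:
  "is_prefix_code_tree c \<Longrightarrow> strict_prefix w (c x) \<Longrightarrow> \<exists>y. prefix (w @ [b]) (c y)"
  unfolding is_prefix_code_tree_def by blast

definition incomparable :: "'a list \<Rightarrow> 'a list \<Rightarrow> bool" where
  "incomparable u v \<longleftrightarrow> \<not> prefix u v \<and> \<not> prefix v u"

definition swap_nodes :: "'a list \<Rightarrow> 'a list \<Rightarrow> 'a list \<Rightarrow> 'a list" where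
  "swap_nodes u v w =
     (if prefix u w then v @ drop (length u) w
      else if prefix v w then u @ drop (length v) w else w)"

text \<open>Words that are not proper ancestors of \<open>u\<close> or \<open>v\<close>; on them the exchange is an order
  isomorphism for the prefix order.\<close>
definition not_above :: "'a list \<Rightarrow> 'a list \<Rightarrow> 'a list \<Rightarrow> bool" where
  "not_above u v w \<longleftrightarrow> \<not> strict_prefix w u \<and> \<not> strict_prefix w v"

lemma incomparable_sym: "incomparable u v \<Longrightarrow> incomparable v u"
  by (auto simp: incomparable_def)

lemma incomparable_common_extension: "incomparable u v \<Longrightarrow> prefix u w \<Longrightarrow> prefix v w \<Longrightarrow> False"
  using prefix_same_cases[of u w v] by (auto simp: incomparable_def)

lemma incomparable_append: "incomparable u v \<Longrightarrow> \<not> prefix u (v @ r)"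
  using prefix_same_cases[of u "v @ r" v] by (auto simp: incomparable_def)

lemma swap_nodes_comm: "incomparable u v \<Longrightarrow> swap_nodes u v w = swap_nodes v u w"
  using incomparable_common_extension[of u v w] by (auto simp: swap_nodes_def)

lemma swap_nodes_u: "prefix u w \<Longrightarrow> swap_nodes u v w = v @ drop (length u) w"
  by (simp add: swap_nodes_def)

lemma swap_nodes_v: "incomparable u v \<Longrightarrow> prefix v w \<Longrightarrow> swap_nodes u v w = u @ drop (length v) w"
  using swap_nodes_comm swap_nodes_u incomparable_sym by metis

lemma swap_nodes_outside: "\<not> prefix u w \<Longrightarrow> \<not> prefix v w \<Longrightarrow> swap_nodes u v w = w"
  by (simp add: swap_nodes_def)

lemma swap_nodes_self: "swap_nodes u u w = w"
  by (auto simp: swap_nodes_def prefix_def)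

lemma prefix_swap_u: "incomparable u v \<Longrightarrow> prefix u (swap_nodes u v w) \<longleftrightarrow> prefix v w"
  using incomparable_common_extension[of u v w] incomparable_append[of u v]
  by (auto simp: swap_nodes_def)

lemma prefix_swap_v: "incomparable u v \<Longrightarrow> prefix v (swap_nodes u v w) \<longleftrightarrow> prefix u w"
  using prefix_swap_u[OF incomparable_sym] swap_nodes_comm by metis

lemma prefix_swap_other:
  assumes "incomparable x u" "incomparable x v" "incomparable u v"
  shows "prefix x (swap_nodes u v w) \<longleftrightarrow> prefix x w"
  using assms incomparable_common_extension[of x u w] incomparable_common_extension[of x v w]
    incomparable_append[of x u] incomparable_append[of x v]
  by (auto simp: swap_nodes_def)

lemma swap_nodes_involution:
  assumes I: "incomparable u v"
  shows "swap_nodes u v (swap_nodes u v w) = w"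
proof -
  consider (u) r where "w = u @ r" | (v) r where "w = v @ r" | (outside) "\<not> prefix u w" "\<not> prefix v w"
    by (auto simp: prefix_def)
  then show ?thesis
  proof cases
    case u then show ?thesis using I by (simp add: swap_nodes_u swap_nodes_v)
  next
    case v then show ?thesis using I by (simp add: swap_nodes_u swap_nodes_v)
  next
    case outside then show ?thesis by (simp add: swap_nodes_outside)
  qed
qed

lemma length_swap_nodes:
  assumes "incomparable u v" "length u = length v"
  shows "length (swap_nodes u v w) = length w"
  using assms by (auto simp: swap_nodes_def prefix_length_le dest: prefix_length_le)

lemma extension_not_above: "incomparable u v \<Longrightarrow> prefix u y \<or> prefix v y \<Longrightarrow> not_above u v y"
  unfolding not_above_def incomparable_def strict_prefix_def
  by (metis prefix_length_le prefix_order.antisym prefix_order.trans)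

lemma swap_not_above:
  "incomparable u v \<Longrightarrow> not_above u v x \<Longrightarrow> not_above u v (swap_nodes u v x)"
  using extension_not_above prefix_swap_u prefix_swap_v swap_nodes_outside by metis

lemma swap_mono_u:
  assumes "prefix u x" "prefix x y"
  shows "prefix (swap_nodes u v x) (swap_nodes u v y)"
proof -
  obtain r t where "x = u @ r" "y = u @ r @ t" using assms by (auto simp: prefix_def)
  then show ?thesis by (simp add: swap_nodes_u)
qed

lemma swap_mono:
  assumes I: "incomparable u v" and x: "not_above u v x" and xy: "prefix x y"
  shows "prefix (swap_nodes u v x) (swap_nodes u v y)"
proof -
  consider "prefix u x" | "prefix v x" | "incomparable x u" "incomparable x v"
    using x unfolding not_above_def incomparable_def strict_prefix_def by blast
  then show ?thesis
  proof cases
    case 1 then show ?thesis using swap_mono_u xy by blast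
  next
    case 2 then show ?thesis using swap_mono_u[of v x y u] xy swap_nodes_comm[OF I] by simp
  next
    case 3
    then have "\<not> prefix u y" "\<not> prefix v y"
      using xy prefix_same_cases[of x y u] prefix_same_cases[of x y v] by (auto simp: incomparable_def)
    moreover have "\<not> prefix u x" "\<not> prefix v x" using 3 by (auto simp: incomparable_def)
    ultimately show ?thesis using xy by (simp add: swap_nodes_outside)
  qed
qed

text \<open>Hence, being an involution, the exchange is an order isomorphism there.\<close>
lemma swap_prefix_iff:
  assumes I: "incomparable u v" and x: "not_above u v x"
  shows "prefix (swap_nodes u v x) (swap_nodes u v y) \<longleftrightarrow> prefix x y"
  using swap_mono[OF I x, of y] swap_mono[OF I swap_not_above[OF I x], of "swap_nodes u v y"]
  by (auto simp: swap_nodes_involution[OF I])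

lemma swap_snoc:
  assumes I: "incomparable u v" and w: "not_above u v w"
  shows "swap_nodes u v (w @ [b]) = swap_nodes u v w @ [b]"
proof -
  consider "prefix u w" | "prefix v w" | "\<not> prefix u w" "\<not> prefix v w" by blast
  then show ?thesis
  proof cases
    case 1 then show ?thesis by (simp add: swap_nodes_u prefix_length_le)
  next
    case 2 then show ?thesis using I by (simp add: swap_nodes_v prefix_length_le)
  next
    case 3
    then have "\<not> prefix u (w @ [b])" "\<not> prefix v (w @ [b])"
      using w by (auto simp: prefix_snoc not_above_def strict_prefix_def)
    then show ?thesis using 3 by (simp add: swap_nodes_outside)
  qed
qed

lemma codeword_not_above:
  assumes T: "is_prefix_code_tree c" and "prefix u (c d)" "prefix v (c e)"
  shows "not_above u v (c x)"
proof -
  have "\<not> strict_prefix (c x) (c y)" for y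
    using tree_prefix_free[OF T, of x y] by (auto simp: strict_prefix_def)
  then show ?thesis
    using assms(2,3) unfolding not_above_def by (meson prefix_order.less_le_trans)
qed

text \<open>The exchanged code is again full: the only delicate children are those of proper
  ancestors of \<open>u\<close> or \<open>v\<close>, which are fixed by the exchange.\<close>
lemma swap_full:
  assumes T: "is_prefix_code_tree c" and I: "incomparable u v"
    and d: "prefix u (c d)" and e: "prefix v (c e)"
    and sp: "strict_prefix w (swap_nodes u v (c x))"
  shows "\<exists>y. prefix (w @ [b]) (swap_nodes u v (c y))"
proof (cases "prefix (w @ [b]) u \<or> prefix (w @ [b]) v")
  case True
  have "prefix u (swap_nodes u v (c e))" "prefix v (swap_nodes u v (c d))"
    using d e prefix_swap_u[OF I] prefix_swap_v[OF I] by auto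
  then show ?thesis using True by (meson prefix_order.trans)
next
  case False
  then have wb: "not_above u v (w @ [b])"
    unfolding not_above_def strict_prefix_def by blast
  have "\<exists>y. strict_prefix (swap_nodes u v w) (c y) \<and> swap_nodes u v (w @ [b]) = swap_nodes u v w @ [b]"
  proof (cases "not_above u v w")
    case True
    have "prefix (swap_nodes u v w) (c x)"
      using swap_mono[OF I True, of "swap_nodes u v (c x)"] sp
      by (simp add: swap_nodes_involution[OF I] strict_prefix_def)
    moreover have "swap_nodes u v w \<noteq> c x"
      using sp swap_nodes_involution[OF I, of w] by auto
    ultimately have "strict_prefix (swap_nodes u v w) (c x)" by (simp add: strict_prefix_def)
    then show ?thesis using swap_snoc[OF I True] by blast
  next
    case above: False
    then have "strict_prefix w u \<or> strict_prefix w v" by (simp add: not_above_def)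
    then have w_node: "strict_prefix w (c d) \<or> strict_prefix w (c e)"
      using d e by (meson prefix_order.less_le_trans)
    have "\<not> prefix u (w @ [b])" "\<not> prefix v (w @ [b])" "\<not> prefix u w" "\<not> prefix v w"
      using above False I
      by (auto simp: prefix_snoc not_above_def incomparable_def strict_prefix_def
               dest: prefix_order.trans prefix_length_le)
    then have "swap_nodes u v (w @ [b]) = w @ [b]" "swap_nodes u v w = w"
      by (simp_all add: swap_nodes_outside)
    then show ?thesis using w_node by metis
  qed
  then obtain y where "prefix (swap_nodes u v (w @ [b])) (c y)"
    using tree_full[OF T] by metis
  then have "prefix (w @ [b]) (swap_nodes u v (c y))"
    using swap_mono[OF I swap_not_above[OF I wb]] swap_nodes_involution[OF I] by metis
  then show ?thesis ..
qed

lemma swap_tree: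
  assumes T: "is_prefix_code_tree c" and I: "incomparable u v"
    and d: "prefix u (c d)" and e: "prefix v (c e)"
  shows "is_prefix_code_tree (\<lambda>x. swap_nodes u v (c x))"
  unfolding is_prefix_code_tree_def
proof (intro conjI allI impI)
  show "inj (\<lambda>x. swap_nodes u v (c x))"
    using T swap_nodes_involution[OF I] unfolding is_prefix_code_tree_def inj_def by metis
  show "\<not> prefix (swap_nodes u v (c x)) (swap_nodes u v (c y))" if "x \<noteq> y" for x y
    using that swap_prefix_iff[OF I codeword_not_above[OF T d e]] tree_prefix_free[OF T] by blast
  show "\<exists>y. prefix (w @ [b]) (swap_nodes u v (c y))"
    if "\<exists>x. strict_prefix w (swap_nodes u v (c x))" for w b
    using that swap_full[OF T I d e] by blast
qed


section \<open>Weights of subtrees and the exchange inequality\<close>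

definition under :: "('a \<Rightarrow> bool list) \<Rightarrow> bool list \<Rightarrow> 'a set" where
  "under c w = {a. prefix w (c a)}"

definition weight :: "real \<Rightarrow> (nat \<times> nat) set \<Rightarrow> ennreal" where
  "weight q S = (\<Sum>\<^sub>\<infinity>a\<in>UNIV. if a \<in> S then ennreal (TDGD q a) else 0)"

lemma ennreal_summable_on [simp]: "(f :: 'a \<Rightarrow> ennreal) summable_on S"
  by (rule nonneg_summable_on_complete) simp

lemma weight_Un: "S \<inter> R = {} \<Longrightarrow> weight q (S \<union> R) = weight q S + weight q R"
proof -
  assume "S \<inter> R = {}"
  then have "(\<lambda>a. if a \<in> S \<union> R then ennreal (TDGD q a) else 0) =
        (\<lambda>a. (if a \<in> S then ennreal (TDGD q a) else 0) + (if a \<in> R then ennreal (TDGD q a) else 0))"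
    by (auto simp: fun_eq_iff)
  then show ?thesis unfolding weight_def by (simp add: infsum_add)
qed

lemma weight_singleton: "weight q {a} = ennreal (TDGD q a)"
proof -
  have "weight q {a} = (\<Sum>\<^sub>\<infinity>b\<in>{a}. if b \<in> {a} then ennreal (TDGD q b) else 0)"
    unfolding weight_def by (rule infsum_cong_neutral) auto
  then show ?thesis by simp
qed

lemma under_codeword: "is_prefix_code_tree c \<Longrightarrow> under c (c a) = {a}"
  unfolding under_def using tree_prefix_free[of c a] by auto

lemma under_swap_u: "incomparable u v \<Longrightarrow> under (\<lambda>a. swap_nodes u v (c a)) u = under c v"
  unfolding under_def using prefix_swap_u by blast

lemma under_swap_v: "incomparable u v \<Longrightarrow> under (\<lambda>a. swap_nodes u v (c a)) v = under c u"
  unfolding under_def using prefix_swap_v by blast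

lemma under_swap_other:
  "incomparable x u \<Longrightarrow> incomparable x v \<Longrightarrow> incomparable u v \<Longrightarrow>
   under (\<lambda>a. swap_nodes u v (c a)) x = under c x"
  unfolding under_def using prefix_swap_other by blast

lemma infsum_cmult_ennreal:
  fixes f :: "'a \<Rightarrow> ennreal"
  assumes "k < top"
  shows "(\<Sum>\<^sub>\<infinity>a\<in>S. k * f a) = k * (\<Sum>\<^sub>\<infinity>a\<in>S. f a)"
proof -
  have "(f has_sum infsum f S) S" by (rule has_sum_infsum) simp
  then have "(sum f \<longlongrightarrow> infsum f S) (finite_subsets_at_top S)" by (simp add: has_sum_def)
  then have "((\<lambda>F. k * sum f F) \<longlongrightarrow> k * infsum f S) (finite_subsets_at_top S)"
    by (rule ennreal_tendsto_cmult[OF assms])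
  then have "((\<lambda>a. k * f a) has_sum k * infsum f S) S"
    by (simp add: has_sum_def sum_distrib_left)
  then show ?thesis by (rule infsumI)
qed

lemma ennreal_weighted_length:
  fixes p :: real and k k' l l' :: nat
  assumes "0 \<le> p" "l' + k = l + k'"
  shows "ennreal (p * real l') + of_nat k * ennreal p = ennreal (p * real l) + of_nat k' * ennreal p"
proof -
  have "real l' + real k = real l + real k'" using assms(2) by (metis of_nat_add)
  then have "p * (real l' + real k) = p * (real l + real k')" by simp
  then have eq: "p * real l' + real k * p = p * real l + real k' * p" by (simp add: algebra_simps)
  have "ennreal (p * real l') + of_nat k * ennreal p = ennreal (p * real l' + real k * p)"
    using assms(1) by (simp add: ennreal_plus ennreal_mult ennreal_of_nat_eq_real_of_nat)
  also have "\<dots> = ennreal (p * real l + real k' * p)" by (simp only: eq)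
  also have "\<dots> = ennreal (p * real l) + of_nat k' * ennreal p"
    using assms(1) by (simp add: ennreal_plus ennreal_mult ennreal_of_nat_eq_real_of_nat)
  finally show ?thesis .
qed

text \<open>The cost identity behind the exchange argument: moving the subtree at the shallower
  node \<open>u\<close> down by \<open>k\<close> levels and the one at \<open>v\<close> up by \<open>k\<close> levels.\<close>
lemma swap_cost:
  assumes q: "0 < q" and I: "incomparable u v" and le: "length u \<le> length v"
  defines "k \<equiv> length v - length u"
  shows "expected_length q (\<lambda>a. swap_nodes u v (c a)) + of_nat k * weight q (under c v)
       = expected_length q c + of_nat k * weight q (under c u)"
proof -
  have k_fin: "of_nat k < (top :: ennreal)" using of_nat_less_top .
  have termwise: "ennreal (TDGD q a * real (length (swap_nodes u v (c a))))
        + of_nat k * (if a \<in> under c v then ennreal (TDGD q a) else 0)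
      = ennreal (TDGD q a * real (length (c a)))
        + of_nat k * (if a \<in> under c u then ennreal (TDGD q a) else 0)" for a
  proof -
    have p: "0 \<le> TDGD q a" using q by (cases a) (simp add: TDGD_def)
    consider (u) "prefix u (c a)" | (v) "prefix v (c a)" | (outside) "\<not> prefix u (c a)" "\<not> prefix v (c a)"
      by blast
    then show ?thesis
    proof cases
      case u
      then have "a \<in> under c u" "a \<notin> under c v"
        using incomparable_common_extension[OF I] by (auto simp: under_def)
      moreover have "length (swap_nodes u v (c a)) + 0 = length (c a) + k"
        using u le by (simp add: swap_nodes_u prefix_length_le k_def)
      note ennreal_weighted_length[OF p this]
      ultimately show ?thesis by simp
    next
      case v
      then have "a \<notin> under c u" "a \<in> under c v"
        using incomparable_common_extension[OF I] by (auto simp: under_def)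
      moreover have "length (swap_nodes u v (c a)) + k = length (c a) + 0"
        using v le I prefix_length_le[OF v] by (simp add: swap_nodes_v k_def)
      note ennreal_weighted_length[OF p this]
      ultimately show ?thesis by simp
    next
      case outside then show ?thesis by (simp add: swap_nodes_outside under_def)
    qed
  qed
  have "expected_length q (\<lambda>a. swap_nodes u v (c a)) + of_nat k * weight q (under c v)
      = (\<Sum>\<^sub>\<infinity>a\<in>UNIV. ennreal (TDGD q a * real (length (swap_nodes u v (c a))))
          + of_nat k * (if a \<in> under c v then ennreal (TDGD q a) else 0))"
    unfolding expected_length_def weight_def by (simp add: infsum_add infsum_cmult_ennreal[OF k_fin])
  also have "\<dots> = (\<Sum>\<^sub>\<infinity>a\<in>UNIV. ennreal (TDGD q a * real (length (c a)))
          + of_nat k * (if a \<in> under c u then ennreal (TDGD q a) else 0))"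
    using termwise by simp
  also have "\<dots> = expected_length q c + of_nat k * weight q (under c u)"
    unfolding expected_length_def weight_def by (simp add: infsum_add infsum_cmult_ennreal[OF k_fin])
  finally show ?thesis .
qed

text \<open>In an optimal tree, of two incomparable nodes the deeper one carries at most the weight
  of the shallower one (otherwise exchanging them would lower the expected length).\<close>
lemma exchange_inequality:
  assumes q: "0 < q" "q < 1" and O: "optimal_tree q c"
    and I: "incomparable u v" and lt: "length u < length v"
    and d: "prefix u (c d)" and e: "prefix v (c e)"
  shows "weight q (under c v) \<le> weight q (under c u)"
proof -
  define k where "k = length v - length u"
  have T: "is_prefix_code_tree c" using O by (simp add: optimal_tree_def)
  have "expected_length q c \<le> expected_length q (\<lambda>a. swap_nodes u v (c a))"
    using O swap_tree[OF T I d e] by (simp add: optimal_tree_def)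
  then have "expected_length q c + of_nat k * weight q (under c v)
      \<le> expected_length q c + of_nat k * weight q (under c u)"
    using swap_cost[OF q(1) I, of c] lt unfolding k_def by (metis add_right_mono less_imp_le)
  then have "of_nat k * weight q (under c v) \<le> of_nat k * weight q (under c u)"
    using optimal_cost_finite[OF q O] by (auto simp: ennreal_add_left_cancel_le)
  moreover have "(of_nat k :: ennreal) \<noteq> 0" "(of_nat k :: ennreal) \<noteq> top"
    using lt by (simp_all add: k_def)
  ultimately show ?thesis using ennreal_mult_le_mult_iff by blast
qed

lemma deeper_node_vs_leaf:
  assumes q: "0 < q" "q < 1" and O: "optimal_tree q c"
    and e: "prefix v (c e)" and lt: "length (c a) < length v"
  shows "weight q (under c v) \<le> ennreal (TDGD q a)"
proof -
  have T: "is_prefix_code_tree c" using O by (simp add: optimal_tree_def)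
  have "\<not> prefix v (c a)" using lt prefix_length_le by fastforce
  moreover have "\<not> prefix (c a) v"
    using e tree_prefix_free[OF T, of a e] \<open>\<not> prefix v (c a)\<close> prefix_order.trans by metis
  ultimately have "incomparable (c a) v" by (simp add: incomparable_def)
  from exchange_inequality[OF q O this lt prefix_order.refl e] show ?thesis
    by (simp add: under_codeword[OF T] weight_singleton)
qed

lemma shallower_node_vs_leaf:
  assumes q: "0 < q" "q < 1" and O: "optimal_tree q c"
    and e: "prefix v (c e)" and a: "a \<notin> under c v" and lt: "length v < length (c a)"
  shows "ennreal (TDGD q a) \<le> weight q (under c v)"
proof -
  have T: "is_prefix_code_tree c" using O by (simp add: optimal_tree_def)
  have "\<not> prefix (c a) v" using lt prefix_length_le by fastforce
  moreover have "\<not> prefix v (c a)" using a by (simp add: under_def)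
  ultimately have "incomparable v (c a)" by (simp add: incomparable_def)
  from exchange_inequality[OF q O this lt e prefix_order.refl] show ?thesis
    by (simp add: under_codeword[OF T] weight_singleton)
qed


section \<open>Rearranging subtrees within one level\<close>

lemma prefix_same_length: "prefix u w \<Longrightarrow> prefix v w \<Longrightarrow> length u = length v \<Longrightarrow> u = v"
  by (metis prefix_length_prefix prefix_order.antisym order_refl)

lemma incomparable_same_length: "length u = length v \<Longrightarrow> u \<noteq> v \<Longrightarrow> incomparable u v"
  unfolding incomparable_def using prefix_same_length[of u v v] prefix_same_length[of v u u] by auto

lemma level_subtrees_disjoint:
  "length v = length v' \<Longrightarrow> under c v \<noteq> under c v' \<Longrightarrow> under c v \<inter> under c v' = {}"
  unfolding under_def using prefix_same_length by blast

lemma card_level_subtrees: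
  assumes "\<And>C. C \<in> \<C> \<Longrightarrow> \<exists>v. length v = n \<and> under c v = C"
  shows "card \<C> \<le> 2 ^ n"
proof -
  have words: "{v :: bool list. length v = n} = {v. set v \<subseteq> UNIV \<and> length v = n}" by simp
  have fin: "finite {v :: bool list. length v = n}"
    unfolding words by (rule finite_lists_length_eq) simp
  have "\<C> \<subseteq> under c ` {v. length v = n}" using assms by blast
  then have "card \<C> \<le> card (under c ` {v. length v = n})"
    using fin by (intro card_mono) auto
  also have "\<dots> \<le> card {v :: bool list. length v = n}" using fin by (rule card_image_le)
  also have "\<dots> = 2 ^ n"
    using card_lists_length_eq[of "UNIV :: bool set" n] by (simp add: card_UNIV_bool)
  finally show ?thesis .
qed

lemma level_swap_tree:
  assumes T: "is_prefix_code_tree c" and "length u = length v" "prefix u (c d)" "prefix v (c e)"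
  shows "is_prefix_code_tree (\<lambda>x. swap_nodes u v (c x))"
proof (cases "u = v")
  case True then show ?thesis using T by (simp add: swap_nodes_self)
next
  case False
  then show ?thesis using assms swap_tree[OF T incomparable_same_length] by blast
qed

lemma level_swap_length: "length u = length v \<Longrightarrow> length (swap_nodes u v w) = length w"
  using length_swap_nodes incomparable_same_length by (metis swap_nodes_self)

lemma under_level_swap:
  assumes "length u = length v" "length x = length u"
  shows "under (\<lambda>a. swap_nodes u v (c a)) x = under c (if x = u then v else if x = v then u else x)"
proof (cases "u = v")
  case True then show ?thesis by (simp add: swap_nodes_self)
next
  case False
  then have I: "incomparable u v" using assms incomparable_same_length by blast
  consider "x = u" | "x = v" | "x \<noteq> u" "x \<noteq> v" by blast
  then show ?thesis
  proof cases
    case 1 then show ?thesis using under_swap_u[OF I] by simp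
  next
    case 2 then show ?thesis using under_swap_v[OF I] False by simp
  next
    case 3
    then have "incomparable x u" "incomparable x v"
      using assms incomparable_same_length[of x u] incomparable_same_length[of x v] by simp_all
    then show ?thesis using under_swap_other[OF _ _ I] 3 by simp
  qed
qed

definition sibling :: "bool list \<Rightarrow> bool list" where
  "sibling v = butlast v @ [\<not> last v]"

lemma length_sibling: "v \<noteq> [] \<Longrightarrow> length (sibling v) = length v"
  by (simp add: sibling_def)

lemma sibling_neq: "sibling v \<noteq> v"
  by (metis last_snoc sibling_def)

lemma sibling_sibling: "v \<noteq> [] \<Longrightarrow> sibling (sibling v) = v"
  by (simp add: sibling_def)

lemma sibling_node:
  assumes T: "is_prefix_code_tree c" and va: "prefix v (c a)" and ne: "v \<noteq> []"
  shows "\<exists>b. prefix (sibling v) (c b)"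
proof -
  have "strict_prefix (butlast v) v"
    using ne strict_prefixI'[of v "butlast v" "last v" "[]"] by simp
  then have "strict_prefix (butlast v) (c a)" using va by (rule prefix_order.less_le_trans)
  from tree_full[OF T this, of "\<not> last v"] show ?thesis by (simp add: sibling_def)
qed

lemma under_parent:
  assumes T: "is_prefix_code_tree c" and va: "prefix v (c a)" and ne: "v \<noteq> []"
  shows "under c (butlast v) = under c v \<union> under c (sibling v)"
proof -
  obtain w b where v: "v = w @ [b]" using ne by (metis append_butlast_last_id)
  have "under c w = under c (w @ [b]) \<union> under c (w @ [\<not> b])"
  proof
    show "under c (w @ [b]) \<union> under c (w @ [\<not> b]) \<subseteq> under c w"
      by (auto simp: under_def dest: append_prefixD)
    show "under c w \<subseteq> under c (w @ [b]) \<union> under c (w @ [\<not> b])"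
    proof
      fix x assume "x \<in> under c w"
      then obtain r where r: "c x = w @ r" by (auto simp: under_def prefix_def)
      have "r \<noteq> []"
      proof
        assume "r = []"
        then have "prefix (c x) (c a)" using r va v by (metis append_Nil2 append_prefixD)
        then have "x = a" using tree_prefix_free[OF T] by blast
        then show False using r \<open>r = []\<close> va v by (simp add: prefix_def)
      qed
      then obtain y r' where "c x = w @ y # r'" using r by (cases r) auto
      then show "x \<in> under c (w @ [b]) \<union> under c (w @ [\<not> b])"
        by (cases "y = b") (auto simp: under_def)
    qed
  qed
  then show ?thesis using v by (simp add: sibling_def)
qed

section \<open>Gathering subtrees below a common ancestor\<close>

lemma realized_disjoint:
  assumes "\<And>C. C \<in> \<C> \<Longrightarrow> \<exists>v. length v = n \<and> under c v = C"
    and "C \<in> \<C>" "C' \<in> \<C>" "C \<noteq> C'"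
  shows "C \<inter> C' = {}"
  using assms level_subtrees_disjoint by metis

text \<open>One pairing step: the subtree at \<open>v2\<close> is moved to the sibling of \<open>v1\<close> by a level
  exchange.\<close>
lemma pair_step:
  assumes T: "is_prefix_code_tree c"
    and len: "length v1 = n" "length v2 = n" and neq: "v1 \<noteq> v2" "v1 \<noteq> []"
    and nodes: "prefix v1 (c d1)" "prefix v2 (c d2)"
    and free: "v1 \<notin> F" "v2 \<notin> F" and F: "\<And>p. p \<in> F \<Longrightarrow> length p = n \<and> sibling p \<in> F"
  obtains c1 where "is_prefix_code_tree c1" "\<And>x. length (c1 x) = length (c x)"
    "under c1 v1 = under c v1" "under c1 (sibling v1) = under c v2"
    "\<And>p. p \<in> F \<Longrightarrow> under c1 p = under c p"
    "\<And>v. length v = n \<Longrightarrow> v \<notin> F \<Longrightarrow> v \<noteq> v1 \<Longrightarrow> v \<noteq> v2 \<Longrightarrow>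
       \<exists>v'. length v' = n \<and> v' \<notin> F \<and> v' \<noteq> v1 \<and> v' \<noteq> sibling v1 \<and> under c1 v' = under c v"
proof -
  define z where "z = sibling v1"
  have z_len: "length z = n" using len neq by (simp add: z_def length_sibling)
  have z_v1: "z \<noteq> v1" by (simp add: z_def sibling_neq)
  have z_free: "z \<notin> F" using F free(1) sibling_sibling[OF neq(2)] unfolding z_def by metis
  obtain e where e: "prefix z (c e)" using sibling_node[OF T nodes(1) neq(2)] z_def by blast
  define c1 where "c1 = (\<lambda>x. swap_nodes v2 z (c x))"
  have U: "under c1 x = under c (if x = v2 then z else if x = z then v2 else x)" if "length x = n" for x
    unfolding c1_def using under_level_swap[of v2 z x c] that len z_len by simp
  have U_z: "under c1 z = under c v2" using U[OF z_len] by (cases "z = v2") simp_all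
  show thesis
  proof (rule that)
    show "is_prefix_code_tree c1"
      unfolding c1_def using level_swap_tree[OF T _ nodes(2) e] len z_len by simp
    show "length (c1 x) = length (c x)" for x
      unfolding c1_def using level_swap_length[of v2 z] len z_len by simp
    show "under c1 v1 = under c v1" using U[OF len(1)] neq z_v1 by simp
    show "under c1 (sibling v1) = under c v2" using U_z by (simp add: z_def)
    show "under c1 p = under c p" if "p \<in> F" for p
    proof -
      have "length p = n" "p \<noteq> v2" "p \<noteq> z" using that F free z_free by auto
      then show ?thesis using U by simp
    qed
    show "\<exists>v'. length v' = n \<and> v' \<notin> F \<and> v' \<noteq> v1 \<and> v' \<noteq> sibling v1 \<and> under c1 v' = under c v"
      if v: "length v = n" "v \<notin> F" "v \<noteq> v1" "v \<noteq> v2" for v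
    proof (cases "v = z")
      case True
      then show ?thesis
        using U[OF len(2)] len free neq v by (intro exI[of _ v2]) (auto simp: z_def)
    next
      case False
      then show ?thesis using U[OF v(1)] v by (intro exI[of _ v]) (simp add: z_def)
    qed
  qed
qed

text \<open>The
  sibling-closed set \<open>F\<close> of nodes already paired is left untouched; it makes the
  induction on \<open>k\<close> go through.\<close>
lemma pairing:
  assumes "is_prefix_code_tree c" "finite \<C>" "2 * k \<le> card \<C>" "0 < n"
    and "\<And>C. C \<in> \<C> \<Longrightarrow> C \<noteq> {} \<and> (\<exists>v. length v = n \<and> v \<notin> F \<and> under c v = C)"
    and "\<And>p. p \<in> F \<Longrightarrow> length p = n \<and> sibling p \<in> F"
  shows "\<exists>c' \<D>. is_prefix_code_tree c' \<and> (\<forall>x. length (c' x) = length (c x)) \<and>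
      (\<forall>p\<in>F. under c' p = under c p) \<and> finite \<D> \<and> k \<le> card \<D> \<and>
      (\<forall>D\<in>\<D>. (\<exists>P. length P = n - 1 \<and> under c' P = D) \<and>
               (\<exists>C1\<in>\<C>. \<exists>C2\<in>\<C>. C1 \<noteq> C2 \<and> D = C1 \<union> C2))"
  using assms
proof (induction k arbitrary: c \<C> F)
  case 0
  then show ?case by (intro exI[of _ c] exI[of _ "{}"]) auto
next
  case (Suc k)
  note T = Suc.prems(1) and fin = Suc.prems(2) and n = Suc.prems(4)
    and realized = Suc.prems(5) and F = Suc.prems(6)
  have disjoint: "C \<inter> C' = {}" if "C \<in> \<C>" "C' \<in> \<C>" "C \<noteq> C'" for C C'
    using realized_disjoint[of \<C> n c] realized that by blast
  from Suc.prems(3) obtain C1 \<C>1 where "\<C> = insert C1 \<C>1" "C1 \<notin> \<C>1" "Suc 0 \<le> card \<C>1"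
    by (auto simp: card_le_Suc_iff)
  moreover from this obtain C2 where "C2 \<in> \<C>1" by fastforce
  ultimately have C12: "C1 \<in> \<C>" "C2 \<in> \<C>" "C1 \<noteq> C2" by auto
  obtain v1 where v1: "length v1 = n" "v1 \<notin> F" "under c v1 = C1" and C1: "C1 \<noteq> {}"
    using realized[OF C12(1)] by blast
  obtain v2 where v2: "length v2 = n" "v2 \<notin> F" "under c v2 = C2" and C2: "C2 \<noteq> {}"
    using realized[OF C12(2)] by blast
  have v12: "v1 \<noteq> v2" "v1 \<noteq> []" using v1 v2 C12 n by auto
  obtain d1 d2 where "prefix v1 (c d1)" "prefix v2 (c d2)"
    using C1 C2 v1 v2 by (auto simp: under_def)
  from pair_step[OF T v1(1) v2(1) v12 this v1(2) v2(2) F] obtain c1 where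
    T1: "is_prefix_code_tree c1" and len1: "\<And>x. length (c1 x) = length (c x)"
    and at_v1: "under c1 v1 = under c v1" and at_sibling: "under c1 (sibling v1) = under c v2"
    and kept: "\<And>p. p \<in> F \<Longrightarrow> under c1 p = under c p"
    and moved: "\<And>v. length v = n \<Longrightarrow> v \<notin> F \<Longrightarrow> v \<noteq> v1 \<Longrightarrow> v \<noteq> v2 \<Longrightarrow>
       \<exists>v'. length v' = n \<and> v' \<notin> F \<and> v' \<noteq> v1 \<and> v' \<noteq> sibling v1 \<and> under c1 v' = under c v"
    by blast
  define F' where "F' = F \<union> {v1, sibling v1}"
  have F': "length p = n \<and> sibling p \<in> F'" if p: "p \<in> F'" for p
  proof -
    consider "p \<in> F" | "p = v1" | "p = sibling v1" using p by (auto simp: F'_def)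
    then show ?thesis
    proof cases
      case 1 then show ?thesis using F[OF 1] by (simp add: F'_def)
    next
      case 2 then show ?thesis using v1(1) by (simp add: F'_def)
    next
      case 3 then show ?thesis using v1(1) v12(2) by (simp add: F'_def length_sibling sibling_sibling)
    qed
  qed
  have realized': "C \<noteq> {} \<and> (\<exists>v. length v = n \<and> v \<notin> F' \<and> under c1 v = C)"
    if C: "C \<in> \<C> - {C1, C2}" for C
  proof -
    obtain v where v: "length v = n" "v \<notin> F" "under c v = C" and "C \<noteq> {}"
      using realized C by blast
    moreover have "v \<noteq> v1" "v \<noteq> v2" using C v v1 v2 by auto
    ultimately show ?thesis using moved[of v] by (auto simp: F'_def)
  qed
  have "2 * k \<le> card (\<C> - {C1, C2})"
    using Suc.prems(3) C12 fin by (simp add: card_Diff_subset)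
  from Suc.IH[OF T1 finite_Diff[OF fin] this n realized' F'] obtain c' \<D>' where
    T': "is_prefix_code_tree c'" and len': "\<forall>x. length (c' x) = length (c1 x)"
    and kept': "\<forall>p\<in>F'. under c' p = under c1 p" and fin': "finite \<D>'" and card': "k \<le> card \<D>'"
    and \<D>': "\<forall>D\<in>\<D>'. (\<exists>P. length P = n - 1 \<and> under c' P = D) \<and>
        (\<exists>D1\<in>\<C> - {C1, C2}. \<exists>D2\<in>\<C> - {C1, C2}. D1 \<noteq> D2 \<and> D = D1 \<union> D2)"
    by blast
  have "under c' v1 = C1" "under c' (sibling v1) = C2"
    using kept' at_v1 at_sibling v1(3) v2(3) by (simp_all add: F'_def)
  moreover obtain b where "prefix v1 (c' b)" using \<open>under c' v1 = C1\<close> C1 by (auto simp: under_def)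
  note under_parent[OF T' this v12(2)]
  ultimately have parent: "under c' (butlast v1) = C1 \<union> C2" by simp
  obtain x where x: "x \<in> C1" using C1 by blast
  have "x \<notin> D" if D: "D \<in> \<D>'" for D
  proof -
    have "\<exists>D1\<in>\<C> - {C1, C2}. \<exists>D2\<in>\<C> - {C1, C2}. D1 \<noteq> D2 \<and> D = D1 \<union> D2"
      using bspec[OF \<D>' D] by simp
    then obtain D1 D2 where D12: "D1 \<in> \<C>" "D1 \<noteq> C1" "D2 \<in> \<C>" "D2 \<noteq> C1" "D = D1 \<union> D2"
      by auto
    have "C1 \<inter> D1 = {}" "C1 \<inter> D2 = {}"
      using disjoint[OF C12(1) D12(1)] disjoint[OF C12(1) D12(3)] D12(2,4) by auto
    then show ?thesis using x D12(5) by blast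
  qed
  then have fresh: "C1 \<union> C2 \<notin> \<D>'" using x by blast
  have merged: "(\<exists>P. length P = n - 1 \<and> under c' P = D) \<and>
      (\<exists>C1\<in>\<C>. \<exists>C2\<in>\<C>. C1 \<noteq> C2 \<and> D = C1 \<union> C2)"
    if "D \<in> insert (C1 \<union> C2) \<D>'" for D
  proof (cases "D = C1 \<union> C2")
    case True
    moreover have "length (butlast v1) = n - 1" using v1(1) by simp
    ultimately show ?thesis using parent C12 by blast
  next
    case False
    then have "D \<in> \<D>'" using that by blast
    from bspec[OF \<D>' this] obtain P D1 D2 where "length P = n - 1" "under c' P = D"
      "D1 \<in> \<C>" "D2 \<in> \<C>" "D1 \<noteq> D2" "D = D1 \<union> D2"
      by auto
    then show ?thesis by blast
  qed
  show ?case
  proof (intro exI[of _ c'] exI[of _ "insert (C1 \<union> C2) \<D>'"] conjI)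
    show "is_prefix_code_tree c'" by (rule T')
    show "\<forall>x. length (c' x) = length (c x)" using len' len1 by simp
    show "\<forall>p\<in>F. under c' p = under c p" using kept' kept by (simp add: F'_def)
    show "finite (insert (C1 \<union> C2) \<D>')" using fin' by simp
    show "Suc k \<le> card (insert (C1 \<union> C2) \<D>')" using fin' fresh card' by simp
    show "\<forall>D\<in>insert (C1 \<union> C2) \<D>'. (\<exists>P. length P = n - 1 \<and> under c' P = D) \<and>
        (\<exists>C1\<in>\<C>. \<exists>C2\<in>\<C>. C1 \<noteq> C2 \<and> D = C1 \<union> C2)"
      by (rule ballI) (rule merged)
  qed
qed

lemma grouping:
  fixes \<C> :: "(nat \<times> nat) set set" and lo hi :: ennreal
  assumes "is_prefix_code_tree c" "finite \<C>" "2 ^ h \<le> card \<C>"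
    and "\<And>C. C \<in> \<C> \<Longrightarrow> C \<noteq> {} \<and> (\<exists>v. length v = n \<and> under c v = C) \<and>
        lo \<le> weight q C \<and> weight q C \<le> hi \<and> a \<notin> C"
  shows "\<exists>c' P. is_prefix_code_tree c' \<and> (\<forall>x. length (c' x) = length (c x)) \<and>
      length P + h = n \<and> under c' P \<noteq> {} \<and>
      2 ^ h * lo \<le> weight q (under c' P) \<and> weight q (under c' P) \<le> 2 ^ h * hi \<and>
      a \<notin> under c' P"
  using assms
proof (induction h arbitrary: c \<C> n lo hi)
  case 0
  then obtain C where "C \<in> \<C>" by fastforce
  with "0.prems"(4) obtain v where "length v = n" "under c v = C"
    and "C \<noteq> {}" "lo \<le> weight q C" "weight q C \<le> hi" "a \<notin> C" by blast
  then show ?case using "0.prems"(1) by (intro exI[of _ c] exI[of _ v]) simp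
next
  case (Suc h)
  note T = Suc.prems(1) and fin = Suc.prems(2) and family = Suc.prems(4)
  have "(2::nat) ^ Suc h \<le> 2 ^ n"
    using Suc.prems(3) card_level_subtrees[of \<C> n c] family by (meson order_trans)
  then have "Suc h \<le> n" by (rule power_le_imp_le_exp[rotated]) simp
  have "2 * 2 ^ h \<le> card \<C>" using Suc.prems(3) by simp
  from pairing[OF T fin this, of n "{}"] \<open>Suc h \<le> n\<close> family obtain c1 \<D> where
    T1: "is_prefix_code_tree c1" and len1: "\<forall>x. length (c1 x) = length (c x)"
    and fin1: "finite \<D>" and card1: "2 ^ h \<le> card \<D>"
    and \<D>: "\<forall>D\<in>\<D>. (\<exists>P. length P = n - 1 \<and> under c1 P = D) \<and>
        (\<exists>C1\<in>\<C>. \<exists>C2\<in>\<C>. C1 \<noteq> C2 \<and> D = C1 \<union> C2)"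
    by auto
  have family1: "D \<noteq> {} \<and> (\<exists>v. length v = n - 1 \<and> under c1 v = D) \<and>
      2 * lo \<le> weight q D \<and> weight q D \<le> 2 * hi \<and> a \<notin> D" if D: "D \<in> \<D>" for D
  proof -
    obtain C1 C2 where C12: "C1 \<in> \<C>" "C2 \<in> \<C>" "C1 \<noteq> C2" "D = C1 \<union> C2"
      using \<D> D by blast
    then have "C1 \<inter> C2 = {}" using realized_disjoint[of \<C> n c] family by blast
    then have w: "weight q D = weight q C1 + weight q C2" using C12(4) by (simp add: weight_Un)
    have "2 * lo \<le> weight q D" "weight q D \<le> 2 * hi"
      unfolding w mult_2 using family[OF C12(1)] family[OF C12(2)] by (simp_all add: add_mono)
    moreover have "D \<noteq> {}" "a \<notin> D" using family[OF C12(1)] family[OF C12(2)] C12(4) by auto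
    moreover have "\<exists>v. length v = n - 1 \<and> under c1 v = D" using \<D> D by blast
    ultimately show ?thesis by blast
  qed
  from Suc.IH[OF T1 fin1 card1 family1] obtain c' P where
    "is_prefix_code_tree c'" "\<forall>x. length (c' x) = length (c1 x)" "length P + h = n - 1"
    "under c' P \<noteq> {}" "2 ^ h * (2 * lo) \<le> weight q (under c' P)"
    "weight q (under c' P) \<le> 2 ^ h * (2 * hi)" "a \<notin> under c' P"
    by blast
  moreover have "2 ^ h * (2 * x) = 2 ^ Suc h * x" for x :: ennreal
    by (simp add: mult.assoc mult.left_commute)
  ultimately show ?case
    using len1 \<open>Suc h \<le> n\<close> by (intro exI[of _ c'] exI[of _ P]) auto
qed


section \<open>The main estimate\<close>

text \<open>A leaf at depth \<open>D\<close> versus at least \<open>2^(l+1)\<close> leaves of a common probability \<open>p\<close> at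
  depth \<open>D + l\<close>: gathering \<open>2^(l-1)\<close> of them below a node at depth \<open>D + 1\<close>, resp.
  \<open>2^(l+1)\<close> of them below a node at depth \<open>D - 1\<close>, and applying the exchange inequality.\<close>
lemma leaf_vs_deep_leaves:
  assumes q: "0 < q" "q < 1" and O: "optimal_tree q c" and l: "1 \<le> l"
    and B: "finite B" "2 ^ (l + 1) \<le> card B" "a \<notin> B"
    and deep: "\<And>b. b \<in> B \<Longrightarrow> length (c b) = length (c a) + l \<and> TDGD q b = p"
  shows "2 ^ (l - 1) * p \<le> TDGD q a \<and> TDGD q a \<le> 2 ^ (l + 1) * p"
proof -
  have T: "is_prefix_code_tree c" using O by (simp add: optimal_tree_def)
  have nonneg: "0 \<le> TDGD q x" for x using q by (cases x) (simp add: TDGD_def)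
  have "B \<noteq> {}"
  proof
    assume "B = {}"
    then show False using B(2) by simp
  qed
  then have p: "0 \<le> p" using deep nonneg by blast
  define \<C> where "\<C> = (\<lambda>b. {b}) ` B"
  have fin: "finite \<C>" and card: "card \<C> = card B"
    using B(1) by (auto simp: \<C>_def card_image)
  have family: "C \<noteq> {} \<and> (\<exists>v. length v = length (c a) + l \<and> under c v = C) \<and>
      ennreal p \<le> weight q C \<and> weight q C \<le> ennreal p \<and> a \<notin> C" if C: "C \<in> \<C>" for C
  proof -
    obtain b where b: "b \<in> B" "C = {b}" using C by (auto simp: \<C>_def)
    then have "length (c b) = length (c a) + l" "under c (c b) = C" "weight q C = ennreal p"
      using deep under_codeword[OF T] by (simp_all add: weight_singleton)
    then show ?thesis using b B(3) by (intro conjI exI[of _ "c b"]) auto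
  qed
  have pow: "(2::ennreal) ^ m * ennreal p = ennreal (2 ^ m * p)" for m
    using p by (simp add: ennreal_mult ennreal_power[symmetric])
  have "(2::nat) ^ (l - 1) \<le> 2 ^ (l + 1)" by (rule power_increasing) auto
  then have "2 ^ (l - 1) \<le> card \<C>" using B(2) card by linarith
  from grouping[OF T fin this family] obtain c1 P1 where
    T1: "is_prefix_code_tree c1" and len1: "\<forall>x. length (c1 x) = length (c x)"
    and P1: "length P1 + (l - 1) = length (c a) + l" "under c1 P1 \<noteq> {}"
    and heavy: "2 ^ (l - 1) * ennreal p \<le> weight q (under c1 P1)"
    by blast
  have O1: "optimal_tree q c1" using optimal_tree_same_lengths[OF O T1] len1 by simp
  obtain e where "prefix P1 (c1 e)" using P1(2) by (auto simp: under_def)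
  from deeper_node_vs_leaf[OF q O1 this] P1(1) l len1
  have "weight q (under c1 P1) \<le> ennreal (TDGD q a)" by simp
  with heavy have "2 ^ (l - 1) * ennreal p \<le> ennreal (TDGD q a)" by (rule order_trans)
  then have "ennreal (2 ^ (l - 1) * p) \<le> ennreal (TDGD q a)" by (simp only: pow)
  then have lower: "2 ^ (l - 1) * p \<le> TDGD q a" using nonneg by (simp add: ennreal_le_iff)
  from grouping[OF T fin _ family, of "l + 1"] B(2) card obtain c2 P2 where
    T2: "is_prefix_code_tree c2" and len2: "\<forall>x. length (c2 x) = length (c x)"
    and P2: "length P2 + (l + 1) = length (c a) + l" "under c2 P2 \<noteq> {}" "a \<notin> under c2 P2"
    and light: "weight q (under c2 P2) \<le> 2 ^ (l + 1) * ennreal p"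
    by auto
  have O2: "optimal_tree q c2" using optimal_tree_same_lengths[OF O T2] len2 by simp
  obtain e where "prefix P2 (c2 e)" using P2(2) by (auto simp: under_def)
  from shallower_node_vs_leaf[OF q O2 this P2(3)] P2(1) len2
  have "ennreal (TDGD q a) \<le> weight q (under c2 P2)" by simp
  then have "ennreal (TDGD q a) \<le> 2 ^ (l + 1) * ennreal p" using light by (rule order_trans)
  then have "ennreal (TDGD q a) \<le> ennreal (2 ^ (l + 1) * p)" by (simp only: pow)
  then have upper: "TDGD q a \<le> 2 ^ (l + 1) * p" using p by (simp add: ennreal_le_iff)
  from lower upper show ?thesis ..
qed

lemma signature_gap_bounds:
  fixes q :: real and l s s' :: nat
  assumes q: "0 < q" "q < 1" and l: "2 \<le> l"
    and lower: "2 ^ (l - 1) * q ^ s' \<le> q ^ s" and upper: "q ^ s \<le> 2 ^ (l + 1) * q ^ s'"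
  shows "(real l - 2) / log 2 (1/q) \<le> real s' - real s
       \<and> real s' - real s \<le> (real l + 1) / log 2 (1/q)"
proof -
  define Lq where "Lq = log 2 (1/q)"
  have Lq: "0 < Lq" "log 2 q = - Lq" using q by (simp_all add: Lq_def log_divide)
  have log_bound: "log 2 (2 ^ k * q ^ m) = real k - real m * Lq" for k m
    using q Lq(2) by (simp add: log_mult log_nat_power)
  have "log 2 (2 ^ (l - 1) * q ^ s') \<le> log 2 (q ^ s)"
    using lower q by (subst log_le_cancel_iff) auto
  then have "real l - 2 \<le> (real s' - real s) * Lq"
    using log_bound[of "l - 1" s'] log_bound[of 0 s] l by (simp add: of_nat_diff algebra_simps)
  moreover have "log 2 (q ^ s) \<le> log 2 (2 ^ (l + 1) * q ^ s')"
    using upper q by (subst log_le_cancel_iff) auto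
  then have "(real s' - real s) * Lq \<le> real l + 1"
    using log_bound[of "l + 1" s'] log_bound[of 0 s] by (simp add: algebra_simps)
  ultimately show ?thesis using Lq(1) unfolding Lq_def by (simp add: divide_le_eq le_divide_eq)
qed

theorem lemma3:
  fixes q :: real and c :: "nat \<times> nat \<Rightarrow> bool list" and L :: "nat \<Rightarrow> nat"
    and s s' l :: nat
  assumes "0 < q" and "q < 1"
    and "optimal_tree q c"
    and "majority_level c L"
    and "l \<ge> 2" and "s \<ge> 2^(l+2) - 1"
    and "s' > s" and "L s' = L s + l"
  shows "(real l - 2) / log 2 (1/q) \<le> real s' - real s
       \<and> real s' - real s \<le> (real l + 1) / log 2 (1/q)"
proof -
  define A where "A = {(i, j). i + j = s \<and> length (c (i, j)) = L s}"
  define B where "B = {(i, j). i + j = s' \<and> length (c (i, j)) = L s'}"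
  have majority: "s + 1 \<le> 2 * card A" "s' + 1 \<le> 2 * card B"
    using assms(4) unfolding majority_level_def A_def B_def by blast+
  have "A \<noteq> {}"
  proof
    assume "A = {}"
    then show False using majority(1) by simp
  qed
  then obtain i j where a: "i + j = s" "length (c (i, j)) = L s" by (auto simp: A_def)
  have "(1::nat) \<le> 2 ^ (l + 2)" by simp
  then have "2 ^ (l + 2) \<le> s + 1" using assms(6) by linarith
  moreover have "(2::nat) ^ (l + 2) = 2 * 2 ^ (l + 1)" by simp
  ultimately have card_B: "2 ^ (l + 1) \<le> card B" using majority(2) assms(7) by linarith
  have fin_B: "finite B" by (rule finite_subset[of _ "{..s'} \<times> {..s'}"]) (auto simp: B_def)
  have a_B: "(i, j) \<notin> B" using a assms(7) by (auto simp: B_def)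
  have deep: "length (c b) = length (c (i, j)) + l \<and> TDGD q b = (1 - q)^2 * q ^ s'"
    if "b \<in> B" for b
    using that a assms(8) by (auto simp: B_def TDGD_def)
  have "1 \<le> l" using assms(5) by simp
  from leaf_vs_deep_leaves[OF assms(1-3) this fin_B card_B a_B deep]
  have "2 ^ (l - 1) * ((1 - q)^2 * q ^ s') \<le> (1 - q)^2 * q ^ s
      \<and> (1 - q)^2 * q ^ s \<le> 2 ^ (l + 1) * ((1 - q)^2 * q ^ s')"
    using a(1) by (simp add: TDGD_def)
  then have "(1 - q)^2 * (2 ^ (l - 1) * q ^ s') \<le> (1 - q)^2 * q ^ s"
    "(1 - q)^2 * q ^ s \<le> (1 - q)^2 * (2 ^ (l + 1) * q ^ s')"
    by (simp_all add: mult.left_commute)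
  moreover have "0 < (1 - q)^2" using assms(2) by simp
  ultimately have "2 ^ (l - 1) * q ^ s' \<le> q ^ s" "q ^ s \<le> 2 ^ (l + 1) * q ^ s'"
    using mult_le_cancel_left_pos by blast+
  then show ?thesis using signature_gap_bounds assms(1,2,5) by blast
qed

end
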